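(* Let $t \ge 1$ and let $A \subseteq \mathbb{Z}^2$ be a set of $t$ cells, where a cell $(x,y)$ denotes row $x$ (rows numbered increasing downwards) and column $y$ (columns numbered increasing rightwards). Suppose the following two conditions hold. (First flood.) There exist pairwise distinct cells $c_1,\dots,c_t$ with $A=\{c_1,\dots,c_t\}$, and integers $s_1,\dots,s_{t-1}\in\{0,1\}$ such that, setting $r_0=0$ and $r_j=r_{j-1}+s_j$, we have $r_j\in\{0,1\}$ for all $1\le j\le t-1$, and for every $1\le j\le t-1$ there is an index $\ell\le j$ with $$c_{j+1}=\begin{cases} c_\ell+(1,0) & \text{if } r_j=0 \text{ (the cell directly below } c_\ell),\\ c_\ell+(0,1) & \text{if } r_j=1 \text{ (the cell directly to the right of } c_\ell).\end{cases}$$ (Second flood.) There exist pairwise distinct cells $d_1,\dots,d_t$ with $A=\{d_1,\dots,d_t\}$, and integers $s'_1,\dots,s'_{t-1}\in\{0,1\}$ such that, setting $r'_0=0$ and $r'_j=r'_{j-1}+s'_j$, we have $r'_j\in\{0,1\}$ for all $1\le j\le t-1$, and for every $1\le j\le t-1$ there is an index $\ell\le j$ with $$d_{j+1}=\begin{cases} d_\ell+(-1,0) & \text{if } r'_j=0 \text{ (the cell directly above } d_\ell),\\ d_\ell+(0,-1) & \text{if } r'_j=1 \text{ (the cell directly to the left of } d_\ell).\end{cases}$$ Then $A$ is a rectangle: there are integers $a\le a'$ and $b\le b'$ with $A=\{a,\dots,a'\}\times\{b,\dots,b'\}$ and $(a'-a+1)(b'-b+1)=t$; moreover $c_1=(a,b)$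 is its top-left corner and $d_1=(a',b')$ is its bottom-right corner.
   Context: This is the combinatorial core of the soundness of a card-based zero-knowledge protocol for the Shikaku puzzle (partition an $m\times n$ grid into rectangles, each containing exactly one given number equal to its area). In the protocol, a prover marks a region by a "first flood" starting from one cell and repeatedly marking a new, previously unmarked cell adjacent to an already marked one, moving only downwards while a secret direction bit $r$ equals $0$ and only rightwards once $r=1$ (where $r$ is updated by secretly adding $s\in\{0,1\}$ and publicly checking $r\ne 2$), followed by a "second flood" over exactly the same set of cells starting from one cell and moving only upwards while $r=0$ and only leftwards once $r=1$. The hypotheses above formalize these two floods. *)

theory Defs
  imports Main
begin

type_synonym cell = "int \<times> int"

definition cell_add :: "cell \<Rightarrow> cell \<Rightarrow> cell" where
  "cell_add p q = (fst p + fst q, snd p + snd q)"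

fun flood_r :: "(nat \<Rightarrow> int) \<Rightarrow> nat \<Rightarrow> int" where
  "flood_r s 0 = 0"
| "flood_r s (Suc j) = flood_r s j + s (Suc j)"

definition is_flood :: "cell \<Rightarrow> cell \<Rightarrow> nat \<Rightarrow> cell set \<Rightarrow> (nat \<Rightarrow> cell) \<Rightarrow> (nat \<Rightarrow> int) \<Rightarrow> bool" where
  "is_flood v0 v1 t A c s \<longleftrightarrow>
     inj_on c {1..t} \<and> A = c ` {1..t} \<and>
     (\<forall>j\<in>{1..t-1}. s j \<in> {0, 1}) \<and>
     (\<forall>j\<in>{1..t-1}. flood_r s j \<in> {0, 1}) \<and>
     (\<forall>j\<in>{1..t-1}. \<exists>l\<in>{1..j}.
        c (j + 1) = cell_add (c l) (if flood_r s j = 0 then v0 else v1))"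

end

theory Submission
  imports Defs "HOL-Library.Product_Plus"
begin

text \<open>The direction bit of a flood never decreases, so a down/right flood from \<open>c 1\<close> first
  moves straight down the column of \<open>c 1\<close> and afterwards only moves right. Hence no cell lies
  above or left of \<open>c 1\<close>, every cell right of that column has its left neighbour in the region,
  and every cell of that column below \<open>c 1\<close> has its upper neighbour in the region. Negating all
  cells turns the up/left flood into a down/right flood from \<open>- d 1\<close>, giving the mirrored
  properties at \<open>d 1\<close>. Walking left, up and then right from \<open>d 1\<close> reaches every cell of the box
  spanned by \<open>c 1\<close> and \<open>d 1\<close>, and the injective enumeration shows that its area is \<open>t\<close>.\<close>

lemma cell_add_eq_plus: "cell_add p q = p + q"
  by (simp add: cell_add_def plus_prod_def)

lemma flood_r_mono:
  assumes "\<forall>j\<in>{1..n}. 0 \<le> s j" and "i \<le> n"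
  shows "flood_r s i \<le> flood_r s n"
  using assms
proof (induction n)
  case (Suc n)
  show ?case
  proof (cases "i = Suc n")
    case False
    with Suc have "flood_r s i \<le> flood_r s n" and "0 \<le> s (Suc n)" by auto
    then show ?thesis by simp
  qed simp
qed simp

lemma flood_r_eq_0_before:
  assumes "\<forall>j\<in>{1..n}. 0 \<le> s j" and "flood_r s n = 0" and "i \<le> n"
  shows "flood_r s i = 0"
proof -
  have "0 \<le> flood_r s i" using flood_r_mono[of i s 0] assms(1,3) by simp
  with flood_r_mono[OF assms(1,3)] assms(2) show ?thesis by simp
qed

lemma is_flood_r_eq_0_before:
  assumes "is_flood v0 v1 t A c s" and "flood_r s n = 0" and "n < t" and "i \<le> n"
  shows "flood_r s i = 0"
proof (rule flood_r_eq_0_before[OF _ assms(2,4)])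
  have bits: "\<forall>j\<in>{1..t - 1}. s j \<in> {0, 1}"
    using assms(1) by (simp add: is_flood_def)
  show "\<forall>j\<in>{1..n}. 0 \<le> s j"
  proof
    fix j assume "j \<in> {1..n}"
    with assms(3) have "j \<in> {1..t - 1}" by auto
    with bits have "s j \<in> {0, 1}" by blast
    then show "0 \<le> s j" by auto
  qed
qed

lemma is_flood_uminus:
  assumes "is_flood v0 v1 t A c s"
  shows "is_flood (- v0) (- v1) t (uminus ` A) (uminus \<circ> c) s"
proof -
  note F = assms[unfolded is_flood_def cell_add_eq_plus]
  have "\<exists>l\<in>{1..j}. (uminus \<circ> c) (j + 1) = (uminus \<circ> c) l + (if flood_r s j = 0 then - v0 else - v1)"
    if "j \<in> {1..t - 1}" for j
  proof -
    from F that obtain l where "l \<in> {1..j}" and "c (j + 1) = c l + (if flood_r s j = 0 then v0 else v1)"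
      by meson
    then show ?thesis by (intro bexI[of _ l]) (simp_all add: algebra_simps)
  qed
  with F show ?thesis
    unfolding is_flood_def cell_add_eq_plus by (simp add: image_comp comp_inj_on)
qed

lemma is_flood_step:
  assumes "is_flood v0 v1 t A c s" and "i \<in> {2..t}"
  shows "\<exists>l\<in>{1..<i}. c i = c l + (if flood_r s (i - 1) = 0 then v0 else v1)"
proof -
  have "i - 1 \<in> {1..t - 1}" using assms(2) by auto
  with assms(1) obtain l where "l \<in> {1..i - 1}"
    and "c (i - 1 + 1) = c l + (if flood_r s (i - 1) = 0 then v0 else v1)"
    unfolding is_flood_def cell_add_eq_plus by blast
  moreover have "i - 1 + 1 = i" using assms(2) by simp
  ultimately show ?thesis by force
qed

lemma down_right_flood_ge_first:
  assumes "is_flood (1, 0) (0, 1) t A c s" and "i \<in> {1..t}"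
  shows "fst (c 1) \<le> fst (c i) \<and> snd (c 1) \<le> snd (c i)"
  using assms(2)
proof (induction i rule: less_induct)
  case (less i)
  show ?case
  proof (cases "i = 1")
    case False
    with less.prems obtain l where "l \<in> {1..<i}"
      and "c i = c l + (if flood_r s (i - 1) = 0 then (1, 0) else (0, 1))"
      using is_flood_step[OF assms(1)] by fastforce
    with less.IH[of l] less.prems show ?thesis by (auto split: if_splits)
  qed simp
qed

lemma down_right_flood_first_column:
  assumes F: "is_flood (1, 0) (0, 1) t A c s" and "i \<in> {1..t}" and "flood_r s (i - 1) = 0"
  shows "snd (c i) = snd (c 1)"
  using assms(2,3)
proof (induction i rule: less_induct)
  case (less i)
  show ?case
  proof (cases "i = 1")
    case False
    with less.prems have "i \<in> {2..t}" by auto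
    then obtain l where l: "l \<in> {1..<i}"
      and cl: "c i = c l + (if flood_r s (i - 1) = 0 then (1, 0) else (0, 1))"
      using is_flood_step[OF F] by blast
    have "flood_r s (l - 1) = 0"
      by (rule is_flood_r_eq_0_before[OF F less.prems(2)]) (use l less.prems(1) in auto)
    then have "snd (c l) = snd (c 1)"
      by (rule less.IH[rotated 2]) (use l less.prems(1) in auto)
    with cl less.prems(2) show ?thesis by simp
  qed simp
qed

definition top_left_closed :: "cell \<Rightarrow> cell set \<Rightarrow> bool" where
  "top_left_closed p A \<longleftrightarrow> p \<in> A \<and> (\<forall>q\<in>A. fst p \<le> fst q \<and> snd p \<le> snd q) \<and>
     (\<forall>x y. (x, y) \<in> A \<longrightarrow> snd p < y \<longrightarrow> (x, y - 1) \<in> A) \<and>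
     (\<forall>x. (x, snd p) \<in> A \<longrightarrow> fst p < x \<longrightarrow> (x - 1, snd p) \<in> A)"

lemma down_right_flood_top_left_closed:
  assumes "t \<ge> 1" and F: "is_flood (1, 0) (0, 1) t A c s"
  shows "top_left_closed (c 1) A"
proof -
  have A: "A = c ` {1..t}" using F by (simp add: is_flood_def)
  have pred: "\<exists>l\<in>{1..<i}. c i = c l + (if flood_r s (i - 1) = 0 then (1, 0) else (0, 1))"
    if "i \<in> {1..t}" and "i \<noteq> 1" for i
    using is_flood_step[OF F] that by simp
  have ge: "fst (c 1) \<le> fst q \<and> snd (c 1) \<le> snd q" if "q \<in> A" for q
    using that down_right_flood_ge_first[OF F] A by blast
  have left: "(x, y - 1) \<in> A" if xy: "(x, y) \<in> A" and gt: "snd (c 1) < y" for x y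
  proof -
    obtain i where i: "i \<in> {1..t}" "c i = (x, y)" using xy A by auto
    with gt have "i \<noteq> 1" by auto
    with pred i(1) obtain l where l: "l \<in> {1..<i}"
      and cl: "c i = c l + (if flood_r s (i - 1) = 0 then (1, 0) else (0, 1))"
      by blast
    have "flood_r s (i - 1) \<noteq> 0"
      using down_right_flood_first_column[OF F i(1)] i(2) gt by auto
    with cl have "c l = c i - (0, 1)" by simp
    with i(2) have "c l = (x, y - 1)" by simp
    moreover have "c l \<in> A" using l i(1) A by auto
    ultimately show ?thesis by simp
  qed
  have up: "(x - 1, snd (c 1)) \<in> A" if xb: "(x, snd (c 1)) \<in> A" and gt: "fst (c 1) < x" for x
  proof -
    obtain i where i: "i \<in> {1..t}" "c i = (x, snd (c 1))" using xb A by auto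
    with gt have "i \<noteq> 1" by (metis fst_conv less_irrefl)
    with pred i(1) obtain l where l: "l \<in> {1..<i}"
      and cl: "c i = c l + (if flood_r s (i - 1) = 0 then (1, 0) else (0, 1))"
      by blast
    have "c l \<in> A" using l i(1) A by auto
    have "flood_r s (i - 1) = 0"
    proof (rule ccontr)
      assume "flood_r s (i - 1) \<noteq> 0"
      with cl have "snd (c i) = snd (c l) + 1" by simp
      with i(2) have "snd (c l) = snd (c 1) - 1" by simp
      with ge[OF \<open>c l \<in> A\<close>] show False by simp
    qed
    with cl have "c l = c i - (1, 0)" by simp
    with i(2) have "c l = (x - 1, snd (c 1))" by simp
    with \<open>c l \<in> A\<close> show ?thesis by simp
  qed
  have "c 1 \<in> A" using assms(1) A by simp
  with ge left up show ?thesis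
    unfolding top_left_closed_def by blast
qed

lemma int_interval_fill_down:
  fixes P :: "int \<Rightarrow> bool"
  assumes "P k" and "\<And>i. lo < i \<Longrightarrow> i \<le> k \<Longrightarrow> P i \<Longrightarrow> P (i - 1)" and "lo \<le> i" and "i \<le> k"
  shows "P i"
  using \<open>i \<le> k\<close> \<open>lo \<le> i\<close> by (induction i rule: int_le_induct) (auto intro: assms)

lemma int_interval_fill_up:
  fixes P :: "int \<Rightarrow> bool"
  assumes "P k" and "\<And>i. k \<le> i \<Longrightarrow> i < hi \<Longrightarrow> P i \<Longrightarrow> P (i + 1)" and "k \<le> i" and "i \<le> hi"
  shows "P i"
  using \<open>k \<le> i\<close> \<open>i \<le> hi\<close> by (induction i rule: int_ge_induct) (auto intro: assms)

lemma rectangle_if_top_left_and_bottom_right_closed: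
  assumes TL: "top_left_closed (a, b) A" and BR: "top_left_closed (- a', - b') (uminus ` A)"
  shows "A = {a..a'} \<times> {b..b'}"
proof
  have neg_mem: "(- x, - y) \<in> uminus ` A \<longleftrightarrow> (x, y) \<in> A" for x y
    by (metis image_iff minus_minus uminus_Pair)
  have lb: "\<And>x y. (x, y) \<in> A \<Longrightarrow> a \<le> x \<and> b \<le> y"
    and left: "\<And>x y. (x, y) \<in> A \<Longrightarrow> b < y \<Longrightarrow> (x, y - 1) \<in> A"
    and up: "\<And>x. (x, b) \<in> A \<Longrightarrow> a < x \<Longrightarrow> (x - 1, b) \<in> A"
    using TL unfolding top_left_closed_def by auto
  have corner: "(a', b') \<in> A"
    using BR neg_mem unfolding top_left_closed_def by blast
  have ub: "x \<le> a' \<and> y \<le> b'" if "(x, y) \<in> A" for x y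
    using BR that neg_mem[of x y] unfolding top_left_closed_def by fastforce
  have right: "(x, y + 1) \<in> A" if "(x, y) \<in> A" and "y < b'" for x y
  proof -
    have "(- x, - y - 1) \<in> uminus ` A"
      using BR that neg_mem[of x y] unfolding top_left_closed_def by simp
    then show ?thesis using neg_mem[of x "y + 1"] by simp
  qed
  show "A \<subseteq> {a..a'} \<times> {b..b'}" using lb ub by fastforce
  show "{a..a'} \<times> {b..b'} \<subseteq> A"
  proof clarify
    fix x y assume x: "x \<in> {a..a'}" and y: "y \<in> {b..b'}"
    have "(a', b) \<in> A"
      by (rule int_interval_fill_down[where P = "\<lambda>z. (a', z) \<in> A" and k = b' and lo = b])
        (use corner left y in auto)
    then have "(x, b) \<in> A"
      by (rule int_interval_fill_down[where P = "\<lambda>z. (z, b) \<in> A" and k = a' and lo = a])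
        (use up x in auto)
    then show "(x, y) \<in> A"
      by (rule int_interval_fill_up[where P = "\<lambda>z. (x, z) \<in> A" and k = b and hi = b'])
        (use right y in auto)
  qed
qed

theorem mainTheorem1:
  fixes t :: nat and A :: "cell set"
    and c d :: "nat \<Rightarrow> cell" and s s' :: "nat \<Rightarrow> int"
  assumes "t \<ge> 1"
    and "is_flood (1, 0) (0, 1) t A c s"
    and "is_flood (-1, 0) (0, -1) t A d s'"
  shows "\<exists>a a' b b' :: int. a \<le> a' \<and> b \<le> b' \<and>
           A = {a..a'} \<times> {b..b'} \<and> (a' - a + 1) * (b' - b + 1) = int t \<and>
           c 1 = (a, b) \<and> d 1 = (a', b')"
proof -
  obtain a b a' b' where c1: "c 1 = (a, b)" and d1: "d 1 = (a', b')" by fastforce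
  have TL: "top_left_closed (a, b) A"
    using down_right_flood_top_left_closed[OF assms(1,2)] c1 by simp
  have "is_flood (1, 0) (0, 1) t (uminus ` A) (uminus \<circ> d) s'"
    using is_flood_uminus[OF assms(3)] by simp
  then have "top_left_closed (- a', - b') (uminus ` A)"
    using down_right_flood_top_left_closed[OF assms(1)] d1 by fastforce
  with TL have rect: "A = {a..a'} \<times> {b..b'}"
    by (rule rectangle_if_top_left_and_bottom_right_closed)
  moreover have "(a, b) \<in> A"
    using TL unfolding top_left_closed_def by blast
  ultimately have le: "a \<le> a'" "b \<le> b'" by auto
  have "card A = t"
    using assms(2) card_image unfolding is_flood_def by fastforce
  then have "t = nat (a' - a + 1) * nat (b' - b + 1)"
    using rect by (simp add: card_cartesian_product)
  then have "int t = (a' - a + 1) * (b' - b + 1)"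
    using le by (simp add: nat_mult_distrib [symmetric])
  then show ?thesis using le rect c1 d1 by auto
qed

end
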